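(* Let $\mathscr M\subset ba(\mathcal A)$. There exists $\lambda\in ba(\mathcal A)$ with $\mathscr M\subset ba(\mathcal A,\lambda)$ if and only if $\mathscr M\subset ba(\mathcal A,m)$ for some $m\in\mathbf A(\mathscr M)$.
   Context: $\mathcal A$ algebra of subsets of $\Omega$; $ba(\mathcal A)$ bounded finitely additive real set functions with $\|\mu\|=|\mu|(\Omega)$. $ba(\mathcal A,\lambda)=\{\mu\in ba(\mathcal A):\mu\ll\lambda\}$, where $\mu\ll\lambda$ means for every $\varepsilon>0$ there is $\delta>0$ with $|\lambda|(A)<\delta\Rightarrow|\mu|(A)<\varepsilon$. $\mathbf A(\mathscr M)=\{\sum_n\alpha_n\frac{|\mu_n|}{1\vee\|\mu_n\|}:\mu_n\in\mathscr M,\ \alpha_n\ge0,\ \sum_n\alpha_n=1\}$. *)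

theory Defs
  imports "HOL-Analysis.Analysis"
begin

text \<open>Set functions are represented as total functions \<open>'a set \<Rightarrow> real\<close>;
  elements of ba are normalised to vanish outside the algebra.\<close>

definition fin_additive :: "'a set set \<Rightarrow> ('a set \<Rightarrow> real) \<Rightarrow> bool" where
  "fin_additive \<A> \<mu> \<longleftrightarrow> \<mu> {} = 0 \<and>
     (\<forall>A\<in>\<A>. \<forall>B\<in>\<A>. A \<inter> B = {} \<longrightarrow> \<mu> (A \<union> B) = \<mu> A + \<mu> B)"

definition tvar :: "'a set set \<Rightarrow> ('a set \<Rightarrow> real) \<Rightarrow> 'a set \<Rightarrow> real" where
  "tvar \<A> \<mu> A = (if A \<in> \<A> then
     Sup {(\<Sum>B\<in>P. \<bar>\<mu> B\<bar>) | P. finite P \<and> P \<subseteq> \<A> \<and> disjoint P \<and> \<Union>P = A}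
   else 0)"

definition ba :: "'a set \<Rightarrow> 'a set set \<Rightarrow> ('a set \<Rightarrow> real) set" where
  "ba \<Omega> \<A> = {\<mu>. fin_additive \<A> \<mu> \<and> (\<exists>c. \<forall>A\<in>\<A>. \<bar>\<mu> A\<bar> \<le> c)
                  \<and> (\<forall>A. A \<notin> \<A> \<longrightarrow> \<mu> A = 0)}"

definition ba_norm :: "'a set \<Rightarrow> 'a set set \<Rightarrow> ('a set \<Rightarrow> real) \<Rightarrow> real" where
  "ba_norm \<Omega> \<A> \<mu> = tvar \<A> \<mu> \<Omega>"

definition abs_cont :: "'a set set \<Rightarrow> ('a set \<Rightarrow> real) \<Rightarrow> ('a set \<Rightarrow> real) \<Rightarrow> bool" where
  "abs_cont \<A> \<mu> lam \<longleftrightarrow> (\<forall>\<epsilon>>0. \<exists>\<delta>>0. \<forall>A\<in>\<A>. tvar \<A> lam A < \<delta> \<longrightarrow> tvar \<A> \<mu> A < \<epsilon>)"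

definition ba_ac :: "'a set \<Rightarrow> 'a set set \<Rightarrow> ('a set \<Rightarrow> real) \<Rightarrow> ('a set \<Rightarrow> real) set" where
  "ba_ac \<Omega> \<A> lam = {\<mu> \<in> ba \<Omega> \<A>. abs_cont \<A> \<mu> lam}"

definition convA :: "'a set \<Rightarrow> 'a set set \<Rightarrow> ('a set \<Rightarrow> real) set \<Rightarrow> ('a set \<Rightarrow> real) set" where
  "convA \<Omega> \<A> \<M> = {(%A. if A \<in> \<A> then
        (\<Sum>n. \<alpha> n * tvar \<A> (\<mu> n) A / max 1 (ba_norm \<Omega> \<A> (\<mu> n))) else 0)
      | \<mu> \<alpha>. (\<forall>n. \<mu> n \<in> \<M>) \<and> (\<forall>n. \<alpha> n \<ge> 0) \<and> \<alpha> sums 1}"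

end

theory Submission
  imports Defs "HOL-Library.Nat_Bijection"
begin

(* One direction is immediate: every m in A(M) is itself a nonnegative member
   of ba(A), so it can play the role of lambda.  For the converse fix lambda with
   M \<subseteq> ba(A, lambda) and put v = |lambda|.  Call t a "control bound" for a nonnegative
   set function m if v A \<le> t on all sets A on which m is small enough, and let eta be the
   infimum of the control bounds of all m in A(M).  Choose m_k in A(M) with control bounds
   t_k \<rightarrow> eta; their convex combination m* = \<Sum> 2^-(k+1) m_k lies in A(M) and has every t_k as a
   control bound.  If some mu in M were not absolutely continuous w.r.t. m*, then the midpoint
   of m* and |mu|/(1 \<or> ||mu||), again in A(M), would have the control bounds t_k - gamma for a
   fixed gamma > 0, which contradicts the choice of eta for large k. *)

definition var_sums :: "'a set set \<Rightarrow> ('a set \<Rightarrow> real) \<Rightarrow> 'a set \<Rightarrow> real set" where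
  "var_sums \<A> \<mu> A = {(\<Sum>B\<in>P. \<bar>\<mu> B\<bar>) | P. finite P \<and> P \<subseteq> \<A> \<and> disjoint P \<and> \<Union>P = A}"

lemma var_sumsI:
  "finite P \<Longrightarrow> P \<subseteq> \<A> \<Longrightarrow> disjoint P \<Longrightarrow> \<Union>P = A \<Longrightarrow> (\<Sum>B\<in>P. \<bar>\<mu> B\<bar>) \<in> var_sums \<A> \<mu> A"
  unfolding var_sums_def by blast

lemma var_sumsE:
  assumes "x \<in> var_sums \<A> \<mu> A"
  obtains P where "finite P" "P \<subseteq> \<A>" "disjoint P" "\<Union>P = A" "x = (\<Sum>B\<in>P. \<bar>\<mu> B\<bar>)"
  using assms unfolding var_sums_def by blast

lemma tvar_eq_Sup: "A \<in> \<A> \<Longrightarrow> tvar \<A> \<mu> A = Sup (var_sums \<A> \<mu> A)"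
  by (simp add: tvar_def var_sums_def)

context algebra
begin

lemma fin_additive_Union:
  assumes fa: "fin_additive M \<mu>" and "finite P" "P \<subseteq> M" "disjoint P"
  shows "\<mu> (\<Union>P) = (\<Sum>B\<in>P. \<mu> B)"
  using assms(2-4)
proof (induction P rule: finite_induct)
  case empty
  then show ?case using fa by (simp add: fin_additive_def)
next
  case (insert B P)
  have "B \<inter> \<Union>P = {}" "\<Union>P \<in> M"
    using insert by (auto simp: pairwise_insert disjnt_def)
  then have "\<mu> (B \<union> \<Union>P) = \<mu> B + \<mu> (\<Union>P)"
    using fa insert.prems(1) by (auto simp: fin_additive_def)
  then show ?case using insert by (simp add: pairwise_insert)
qed

context
  fixes \<mu> assumes mu: "\<mu> \<in> ba \<Omega> M"
begin

lemma ba_fin_additive: "fin_additive M \<mu>"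
  using mu by (simp add: ba_def)

lemma ba_empty: "\<mu> {} = 0"
  using ba_fin_additive by (simp add: fin_additive_def)

text \<open>A bounded additive function has bounded variation: splitting a disjoint family by
  the sign of \<open>\<mu>\<close>, its sum of \<open>\<bar>\<mu>\<bar>\<close> is the difference of the values on two sets of the algebra.\<close>
lemma ba_variation_bounded:
  obtains c where "\<And>P. finite P \<Longrightarrow> P \<subseteq> M \<Longrightarrow> disjoint P \<Longrightarrow> (\<Sum>B\<in>P. \<bar>\<mu> B\<bar>) \<le> c"
proof -
  obtain c where c: "\<forall>A\<in>M. \<bar>\<mu> A\<bar> \<le> c"
    using mu by (auto simp: ba_def)
  have "(\<Sum>B\<in>P. \<bar>\<mu> B\<bar>) \<le> 2 * c" if P: "finite P" "P \<subseteq> M" "disjoint P" for P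
  proof -
    define Pos where "Pos = {B\<in>P. \<mu> B \<ge> 0}"
    define Neg where "Neg = {B\<in>P. \<mu> B < 0}"
    have fin: "finite Pos" "finite Neg" and sub: "Pos \<subseteq> M" "Neg \<subseteq> M"
      and dis: "disjoint Pos" "disjoint Neg"
      using P by (auto simp: Pos_def Neg_def intro: pairwise_subset)
    have "(\<Sum>B\<in>P. \<bar>\<mu> B\<bar>) = (\<Sum>B\<in>Pos. \<bar>\<mu> B\<bar>) + (\<Sum>B\<in>Neg. \<bar>\<mu> B\<bar>)"
      using fin by (subst sum.union_disjoint[symmetric]) (auto simp: Pos_def Neg_def intro: sum.cong)
    also have "\<dots> = (\<Sum>B\<in>Pos. \<mu> B) - (\<Sum>B\<in>Neg. \<mu> B)"
      by (simp add: Pos_def Neg_def sum_negf[symmetric])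
    also have "\<dots> = \<mu> (\<Union>Pos) - \<mu> (\<Union>Neg)"
      using fin_additive_Union[OF ba_fin_additive] fin sub dis by simp
    also have "\<dots> \<le> 2 * c"
    proof -
      have "\<Union>Pos \<in> M" "\<Union>Neg \<in> M" using fin sub by auto
      then have "\<mu> (\<Union>Pos) \<le> c" "- \<mu> (\<Union>Neg) \<le> c" using c by (auto simp: abs_le_iff)
      then show ?thesis by linarith
    qed
    finally show ?thesis .
  qed
  then show ?thesis by (rule that)
qed

lemma var_sums_bdd: "bdd_above (var_sums M \<mu> A)"
proof -
  obtain c where "\<And>P. finite P \<Longrightarrow> P \<subseteq> M \<Longrightarrow> disjoint P \<Longrightarrow> (\<Sum>B\<in>P. \<bar>\<mu> B\<bar>) \<le> c"
    using ba_variation_bounded by blast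
  then show ?thesis
    unfolding bdd_above_def by (metis var_sumsE)
qed

lemma tvar_upper: "A \<in> M \<Longrightarrow> x \<in> var_sums M \<mu> A \<Longrightarrow> x \<le> tvar M \<mu> A"
  using var_sums_bdd by (simp add: tvar_eq_Sup cSup_upper)

lemma abs_le_tvar: "A \<in> M \<Longrightarrow> \<bar>\<mu> A\<bar> \<le> tvar M \<mu> A"
  using tvar_upper var_sumsI[of "{A}" M A \<mu>] by simp

lemma tvar_nonneg: "0 \<le> tvar M \<mu> A"
  using abs_le_tvar[of A] by (cases "A \<in> M") (auto simp: tvar_def)

lemma tvar_least:
  assumes "A \<in> M"
    and "\<And>P. finite P \<Longrightarrow> P \<subseteq> M \<Longrightarrow> disjoint P \<Longrightarrow> \<Union>P = A \<Longrightarrow> (\<Sum>B\<in>P. \<bar>\<mu> B\<bar>) \<le> t"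
  shows "tvar M \<mu> A \<le> t"
  unfolding tvar_eq_Sup[OF assms(1)]
proof (rule cSup_least)
  show "var_sums M \<mu> A \<noteq> {}"
    using var_sumsI[of "{A}" M A \<mu>] assms(1) by auto
qed (use assms(2) in \<open>auto elim: var_sumsE\<close>)

lemma var_sums_Un:
  assumes "A \<inter> B = {}" "x \<in> var_sums M \<mu> A" "y \<in> var_sums M \<mu> B"
  shows "x + y \<in> var_sums M \<mu> (A \<union> B)"
proof -
  obtain P where P: "finite P" "P \<subseteq> M" "disjoint P" "\<Union>P = A" "x = (\<Sum>C\<in>P. \<bar>\<mu> C\<bar>)"
    using assms(2) by (rule var_sumsE)
  obtain Q where Q: "finite Q" "Q \<subseteq> M" "disjoint Q" "\<Union>Q = B" "y = (\<Sum>C\<in>Q. \<bar>\<mu> C\<bar>)"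
    using assms(3) by (rule var_sumsE)
  have PQ: "C = {}" if "C \<in> P \<inter> Q" for C
    using that P(4) Q(4) assms(1) by blast
  have "(\<Sum>C\<in>P \<inter> Q. \<bar>\<mu> C\<bar>) = 0"
    using PQ ba_empty by (intro sum.neutral) auto
  then have "(\<Sum>C\<in>P \<union> Q. \<bar>\<mu> C\<bar>) = x + y"
    using sum.union_inter[OF P(1) Q(1), of "\<lambda>C. \<bar>\<mu> C\<bar>"] P(5) Q(5) by simp
  moreover have "disjoint (P \<union> Q)"
    using P(3,4) Q(3,4) assms(1) unfolding pairwise_def disjnt_def by blast
  ultimately show ?thesis
    using var_sumsI[of "P \<union> Q" M "A \<union> B" \<mu>] P Q by auto
qed

lemma tvar_superadd:
  assumes A: "A \<in> M" and B: "B \<in> M" and AB: "A \<inter> B = {}"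
  shows "tvar M \<mu> A + tvar M \<mu> B \<le> tvar M \<mu> (A \<union> B)"
proof -
  have le: "x + y \<le> tvar M \<mu> (A \<union> B)" if "x \<in> var_sums M \<mu> A" "y \<in> var_sums M \<mu> B" for x y
    using var_sums_Un[OF AB that] tvar_upper A B by blast
  have A_le: "tvar M \<mu> A \<le> tvar M \<mu> (A \<union> B) - y" if y: "y \<in> var_sums M \<mu> B" for y
  proof (rule tvar_least[OF A])
    fix P assume "finite P" "P \<subseteq> M" "disjoint P" "\<Union>P = A"
    from le[OF var_sumsI[OF this] y] show "(\<Sum>C\<in>P. \<bar>\<mu> C\<bar>) \<le> tvar M \<mu> (A \<union> B) - y"
      by simp
  qed
  have "tvar M \<mu> B \<le> tvar M \<mu> (A \<union> B) - tvar M \<mu> A"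
  proof (rule tvar_least[OF B])
    fix P assume "finite P" "P \<subseteq> M" "disjoint P" "\<Union>P = B"
    from A_le[OF var_sumsI[OF this]]
    show "(\<Sum>C\<in>P. \<bar>\<mu> C\<bar>) \<le> tvar M \<mu> (A \<union> B) - tvar M \<mu> A" by linarith
  qed
  then show ?thesis by linarith
qed

lemma var_sums_restrict:
  assumes R: "finite R" "R \<subseteq> M" "disjoint R" and A: "A \<in> M"
  shows "(\<Sum>C\<in>R. \<bar>\<mu> (C \<inter> A)\<bar>) \<in> var_sums M \<mu> (\<Union>R \<inter> A)"
proof -
  have "(\<Sum>D\<in>(\<lambda>C. C \<inter> A) ` R. \<bar>\<mu> D\<bar>) = (\<Sum>C\<in>R. \<bar>\<mu> (C \<inter> A)\<bar>)"
  proof (subst sum.reindex_nontrivial[OF R(1)])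
    fix C D assume "C \<in> R" "D \<in> R" "C \<noteq> D" "C \<inter> A = D \<inter> A"
    then have "C \<inter> A = {}" using R(3) by (auto simp: pairwise_def disjnt_def)
    then show "\<bar>\<mu> (C \<inter> A)\<bar> = 0" using ba_empty by simp
  qed simp
  moreover have "disjoint ((\<lambda>C. C \<inter> A) ` R)"
    using R(3) by (auto simp: pairwise_def disjnt_def)
  ultimately show ?thesis
    using var_sumsI[of "(\<lambda>C. C \<inter> A) ` R" M "\<Union>R \<inter> A" \<mu>] R A by auto
qed

lemma tvar_subadd:
  assumes A: "A \<in> M" and B: "B \<in> M" and AB: "A \<inter> B = {}"
  shows "tvar M \<mu> (A \<union> B) \<le> tvar M \<mu> A + tvar M \<mu> B"
proof (rule tvar_least)
  show "A \<union> B \<in> M" using A B by auto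
  fix R assume R: "finite R" "R \<subseteq> M" "disjoint R" "\<Union>R = A \<union> B"
  have "\<bar>\<mu> C\<bar> \<le> \<bar>\<mu> (C \<inter> A)\<bar> + \<bar>\<mu> (C \<inter> B)\<bar>" if C: "C \<in> R" for C
  proof -
    have "C = (C \<inter> A) \<union> (C \<inter> B)" "(C \<inter> A) \<inter> (C \<inter> B) = {}"
      using C R(4) AB by auto
    moreover have "C \<inter> A \<in> M" "C \<inter> B \<in> M" using C R(2) A B by auto
    ultimately have "\<mu> C = \<mu> (C \<inter> A) + \<mu> (C \<inter> B)"
      using ba_fin_additive unfolding fin_additive_def by metis
    then show ?thesis by linarith
  qed
  then have "(\<Sum>C\<in>R. \<bar>\<mu> C\<bar>) \<le> (\<Sum>C\<in>R. \<bar>\<mu> (C \<inter> A)\<bar>) + (\<Sum>C\<in>R. \<bar>\<mu> (C \<inter> B)\<bar>)"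
    by (simp add: sum.distrib[symmetric] sum_mono)
  also have "\<dots> \<le> tvar M \<mu> A + tvar M \<mu> B"
    using var_sums_restrict[OF R(1-3) A] var_sums_restrict[OF R(1-3) B] R(4) A B
    by (intro add_mono tvar_upper) (auto simp: Int_absorb1)
  finally show "(\<Sum>C\<in>R. \<bar>\<mu> C\<bar>) \<le> tvar M \<mu> A + tvar M \<mu> B" .
qed

lemma tvar_additive:
  "A \<in> M \<Longrightarrow> B \<in> M \<Longrightarrow> A \<inter> B = {} \<Longrightarrow> tvar M \<mu> (A \<union> B) = tvar M \<mu> A + tvar M \<mu> B"
  using tvar_subadd tvar_superadd by (meson order_antisym)

lemma tvar_empty: "tvar M \<mu> {} = 0"
  using tvar_additive[of "{}" "{}"] by simp

lemma tvar_mono: "A \<in> M \<Longrightarrow> B \<in> M \<Longrightarrow> A \<subseteq> B \<Longrightarrow> tvar M \<mu> A \<le> tvar M \<mu> B"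
  using tvar_additive[of A "B - A"] tvar_nonneg[of "B - A"] by (simp add: Un_absorb1 Diff)

lemma tvar_le_norm: "A \<in> M \<Longrightarrow> tvar M \<mu> A \<le> ba_norm \<Omega> M \<mu>"
  unfolding ba_norm_def using tvar_mono sets_into_space top by blast

end

lemma tvar_of_nonneg:
  assumes m: "m \<in> ba \<Omega> M" and nn: "\<And>A. 0 \<le> m A" and A: "A \<in> M"
  shows "tvar M m A = m A"
proof (rule order_antisym)
  show "m A \<le> tvar M m A" using abs_le_tvar[OF m A] by simp
  show "tvar M m A \<le> m A"
  proof (rule tvar_least[OF m A])
    fix P assume P: "finite P" "P \<subseteq> M" "disjoint P" "\<Union>P = A"
    have "(\<Sum>B\<in>P. \<bar>m B\<bar>) = (\<Sum>B\<in>P. m B)" using nn by simp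
    also have "\<dots> = m A" using fin_additive_Union[OF ba_fin_additive[OF m] P(1-3)] P(4) by simp
    finally show "(\<Sum>B\<in>P. \<bar>m B\<bar>) \<le> m A" by simp
  qed
qed

lemma nonneg_subadditive:
  assumes m: "m \<in> ba \<Omega> M" and nn: "\<And>A. 0 \<le> m A" and A: "A \<in> M" and B: "B \<in> M"
  shows "m (A \<union> B) \<le> m A + m B"
proof -
  have fa: "\<And>X Y. X \<in> M \<Longrightarrow> Y \<in> M \<Longrightarrow> X \<inter> Y = {} \<Longrightarrow> m (X \<union> Y) = m X + m Y"
    using ba_fin_additive[OF m] by (simp add: fin_additive_def)
  have "m (A \<union> B) = m A + m (B - A)"
    using fa[of A "B - A"] A B by (simp add: Diff)
  moreover have "m ((B - A) \<union> (B \<inter> A)) = m (B - A) + m (B \<inter> A)"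
    using A B by (intro fa) auto
  then have "m B = m (B - A) + m (B \<inter> A)"
    by (metis Un_Diff_Int)
  ultimately show ?thesis using nn[of "B \<inter> A"] by simp
qed

end

text \<open>A double series of nonnegative terms may be summed along the Cantor enumeration
  of \<open>\<nat> \<times> \<nat>\<close>; this is what makes convex combinations of elements of \<open>\<^bold>A(\<M>)\<close> again
  countable convex combinations.\<close>
lemma nonneg_double_sums:
  fixes f :: "nat \<times> nat \<Rightarrow> real"
  assumes nn: "\<And>p. f p \<ge> 0" and inner: "\<And>k. (\<lambda>n. f (k, n)) sums g k" and outer: "g sums G"
  shows "(\<lambda>j. f (prod_decode j)) sums G"
proof -
  have i: "\<And>k. ((\<lambda>n. f (k, n)) has_sum g k) UNIV"
    using inner nn by (intro sums_nonneg_imp_has_sum) auto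
  have "\<And>k. g k \<ge> 0" using i nn by (meson has_sum_nonneg)
  then have o: "(g has_sum G) UNIV" using outer by (intro sums_nonneg_imp_has_sum) auto
  have "f summable_on Sigma UNIV (\<lambda>_. UNIV)"
    by (rule summable_on_SigmaI[OF i]) (use o nn in \<open>auto intro: has_sum_imp_summable\<close>)
  then have "(f has_sum G) UNIV"
    using has_sum_SigmaI[OF i o] by simp
  then have "((\<lambda>j. f (prod_decode j)) has_sum G) UNIV"
    using has_sum_reindex_bij_betw[OF bij_prod_decode] by blast
  then show ?thesis by (rule has_sum_imp_sums)
qed

lemma summable_weighted_bounded:
  fixes \<alpha> f :: "nat \<Rightarrow> real"
  assumes "\<And>n. 0 \<le> \<alpha> n" "summable \<alpha>" "\<And>n. \<bar>f n\<bar> \<le> 1"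
  shows "summable (\<lambda>n. \<alpha> n * f n)"
  by (rule summable_comparison_test[of _ \<alpha>])
    (use assms in \<open>auto simp: abs_mult intro!: exI[of _ 0] mult_left_le\<close>)

definition nvar :: "'a set \<Rightarrow> 'a set set \<Rightarrow> ('a set \<Rightarrow> real) \<Rightarrow> 'a set \<Rightarrow> real" where
  "nvar \<Omega> \<A> \<mu> A = tvar \<A> \<mu> A / max 1 (ba_norm \<Omega> \<A> \<mu>)"

lemma convA_iff:
  "m \<in> convA \<Omega> \<A> \<M> \<longleftrightarrow> (\<exists>\<mu> \<alpha>. (\<forall>n. \<mu> n \<in> \<M>) \<and> (\<forall>n. \<alpha> n \<ge> 0) \<and> \<alpha> sums 1 \<and>
     m = (\<lambda>A. if A \<in> \<A> then (\<Sum>n. \<alpha> n * nvar \<Omega> \<A> (\<mu> n) A) else 0))"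
  unfolding convA_def nvar_def times_divide_eq_right by blast

context algebra
begin

context
  fixes \<mu> assumes mu: "\<mu> \<in> ba \<Omega> M"
begin

lemma nvar_nonneg: "0 \<le> nvar \<Omega> M \<mu> A"
  unfolding nvar_def using tvar_nonneg[OF mu] by simp

lemma nvar_le_1: "nvar \<Omega> M \<mu> A \<le> 1"
proof (cases "A \<in> M")
  case True
  then have "tvar M \<mu> A \<le> max 1 (ba_norm \<Omega> M \<mu>)" using tvar_le_norm[OF mu] by fastforce
  then show ?thesis unfolding nvar_def by simp
qed (simp add: nvar_def tvar_def)

lemma abs_nvar_le_1: "\<bar>nvar \<Omega> M \<mu> A\<bar> \<le> 1"
  using nvar_nonneg nvar_le_1 by (simp add: abs_le_iff)

lemma nvar_additive:
  "A \<in> M \<Longrightarrow> B \<in> M \<Longrightarrow> A \<inter> B = {} \<Longrightarrow> nvar \<Omega> M \<mu> (A \<union> B) = nvar \<Omega> M \<mu> A + nvar \<Omega> M \<mu> B"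
  unfolding nvar_def using tvar_additive[OF mu] by (simp add: add_divide_distrib)

end

context
  fixes \<M> assumes \<M>: "\<M> \<subseteq> ba \<Omega> M"
begin

lemma nvar_series:
  assumes mu: "\<And>n. \<mu> n \<in> \<M>" and \<alpha>: "\<And>n. \<alpha> n \<ge> 0" "\<alpha> sums 1"
  shows "(\<lambda>n. \<alpha> n * nvar \<Omega> M (\<mu> n) A) sums (\<Sum>n. \<alpha> n * nvar \<Omega> M (\<mu> n) A)"
    and "0 \<le> (\<Sum>n. \<alpha> n * nvar \<Omega> M (\<mu> n) A)" "(\<Sum>n. \<alpha> n * nvar \<Omega> M (\<mu> n) A) \<le> 1"
proof -
  have ba: "\<mu> n \<in> ba \<Omega> M" for n using mu \<M> by auto
  have summable: "summable (\<lambda>n. \<alpha> n * nvar \<Omega> M (\<mu> n) A)"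
    by (rule summable_weighted_bounded[OF \<alpha>(1) sums_summable[OF \<alpha>(2)] abs_nvar_le_1[OF ba]])
  then show "(\<lambda>n. \<alpha> n * nvar \<Omega> M (\<mu> n) A) sums (\<Sum>n. \<alpha> n * nvar \<Omega> M (\<mu> n) A)"
    by (rule summable_sums)
  show "0 \<le> (\<Sum>n. \<alpha> n * nvar \<Omega> M (\<mu> n) A)"
    using summable \<alpha>(1) nvar_nonneg[OF ba] by (intro suminf_nonneg) auto
  have "(\<Sum>n. \<alpha> n * nvar \<Omega> M (\<mu> n) A) \<le> (\<Sum>n. \<alpha> n)"
    using summable sums_summable[OF \<alpha>(2)] \<alpha>(1) nvar_le_1[OF ba]
    by (intro suminf_le) (auto intro: mult_left_le)
  then show "(\<Sum>n. \<alpha> n * nvar \<Omega> M (\<mu> n) A) \<le> 1"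
    using \<alpha>(2) by (simp add: sums_iff)
qed

lemma convA_bounds:
  assumes "m \<in> convA \<Omega> M \<M>"
  shows "0 \<le> m A" "m A \<le> 1"
  using assms nvar_series(2,3) unfolding convA_iff by auto

lemma convA_in_ba:
  assumes "m \<in> convA \<Omega> M \<M>"
  shows "m \<in> ba \<Omega> M"
proof -
  obtain \<mu> \<alpha> where mu: "\<And>n. \<mu> n \<in> \<M>" and \<alpha>: "\<And>n. \<alpha> n \<ge> 0" "\<alpha> sums 1"
    and m: "m = (\<lambda>A. if A \<in> M then (\<Sum>n. \<alpha> n * nvar \<Omega> M (\<mu> n) A) else 0)"
    using assms unfolding convA_iff by blast
  have ba: "\<mu> n \<in> ba \<Omega> M" for n using mu \<M> by auto
  note S = nvar_series(1)[OF mu \<alpha>]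
  have "fin_additive M m"
    unfolding fin_additive_def
  proof (intro conjI ballI impI)
    show "m {} = 0" using tvar_empty[OF ba] by (simp add: m nvar_def)
    fix A B assume A: "A \<in> M" and B: "B \<in> M" and AB: "A \<inter> B = {}"
    have "(\<lambda>n. \<alpha> n * nvar \<Omega> M (\<mu> n) (A \<union> B)) sums (m A + m B)"
      using sums_add[OF S[where A=A] S[where A=B]] nvar_additive[OF ba A B AB] A B
      by (simp add: m distrib_left)
    moreover have "A \<union> B \<in> M" using A B by auto
    ultimately show "m (A \<union> B) = m A + m B" using A B by (simp add: m sums_iff)
  qed
  moreover have "\<bar>m A\<bar> \<le> 1" for A
    using convA_bounds[OF assms, of A] by linarith
  moreover have "m A = 0" if "A \<notin> M" for A
    using that by (simp add: m)
  ultimately show ?thesis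
    unfolding ba_def by blast
qed

text \<open>\<open>\<^bold>A(\<M>)\<close> is closed under countable convex combinations: the coefficients multiply
  and the resulting double series is re-enumerated as a single one.\<close>
lemma convA_convex:
  assumes mk: "\<And>k. m k \<in> convA \<Omega> M \<M>" and \<beta>: "\<And>k. \<beta> k \<ge> 0" "\<beta> sums 1"
  shows "(\<lambda>A. if A \<in> M then (\<Sum>k. \<beta> k * m k A) else 0) \<in> convA \<Omega> M \<M>"
proof -
  have "\<forall>k. \<exists>p. (\<forall>n. fst p n \<in> \<M>) \<and> (\<forall>n. snd p n \<ge> 0) \<and> snd p sums 1 \<and>
     m k = (\<lambda>A. if A \<in> M then (\<Sum>n. snd p n * nvar \<Omega> M (fst p n) A) else 0)"
  proof
    fix k
    obtain \<mu> \<alpha> where "\<forall>n. \<mu> n \<in> \<M>" "\<forall>n. \<alpha> n \<ge> 0" "\<alpha> sums 1"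
      "m k = (\<lambda>A. if A \<in> M then (\<Sum>n. \<alpha> n * nvar \<Omega> M (\<mu> n) A) else 0)"
      using mk[of k] unfolding convA_iff by blast
    then show "\<exists>p. (\<forall>n. fst p n \<in> \<M>) \<and> (\<forall>n. snd p n \<ge> 0) \<and> snd p sums 1 \<and>
      m k = (\<lambda>A. if A \<in> M then (\<Sum>n. snd p n * nvar \<Omega> M (fst p n) A) else 0)"
      by (intro exI[of _ "(\<mu>, \<alpha>)"]) (simp cong: if_cong)
  qed
  from choice[OF this] obtain F where F: "\<forall>k. (\<forall>n. fst (F k) n \<in> \<M>) \<and> (\<forall>n. snd (F k) n \<ge> 0) \<and>
     snd (F k) sums 1 \<and> m k = (\<lambda>A. if A \<in> M then (\<Sum>n. snd (F k) n * nvar \<Omega> M (fst (F k) n) A) else 0)"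
    by blast
  define MU where "MU k = fst (F k)" for k
  define AL where "AL k = snd (F k)" for k
  have MU: "\<And>k n. MU k n \<in> \<M>" and AL: "\<And>k n. AL k n \<ge> 0" "\<And>k. AL k sums 1"
    and mk_eq: "\<And>k. m k = (\<lambda>A. if A \<in> M then (\<Sum>n. AL k n * nvar \<Omega> M (MU k n) A) else 0)"
    using F by (simp_all add: MU_def AL_def cong: if_cong)
  have MU_ba: "MU k n \<in> ba \<Omega> M" for k n using MU \<M> by auto
  define \<mu>' where "\<mu>' j = (case prod_decode j of (k, n) \<Rightarrow> MU k n)" for j
  define \<alpha>' where "\<alpha>' j = (case prod_decode j of (k, n) \<Rightarrow> \<beta> k * AL k n)" for j
  have \<alpha>'_sums: "\<alpha>' sums 1"
    unfolding \<alpha>'_def using \<beta> AL sums_mult[OF AL(2), of "\<beta> _"]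
    by (intro nonneg_double_sums[where g = \<beta>, of "\<lambda>(k, n). \<beta> k * AL k n", simplified])
      (auto simp: case_prod_unfold)
  have val: "(\<lambda>j. \<alpha>' j * nvar \<Omega> M (\<mu>' j) A) sums (\<Sum>k. \<beta> k * m k A)" if A: "A \<in> M" for A
  proof -
    have inner: "(\<lambda>n. AL k n * nvar \<Omega> M (MU k n) A) sums m k A" for k
      using nvar_series(1)[OF MU AL] A by (simp add: mk_eq)
    have "\<bar>m k A\<bar> \<le> 1" for k
      using convA_bounds[OF mk, of k A] by linarith
    then have outer: "(\<lambda>k. \<beta> k * m k A) sums (\<Sum>k. \<beta> k * m k A)"
      using \<beta> by (intro summable_sums summable_weighted_bounded) (auto simp: sums_iff)
    have "(\<lambda>j. (\<lambda>(k, n). \<beta> k * (AL k n * nvar \<Omega> M (MU k n) A)) (prod_decode j))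
            sums (\<Sum>k. \<beta> k * m k A)"
      using \<beta> AL nvar_nonneg[OF MU_ba] sums_mult[OF inner, of "\<beta> _"]
      by (intro nonneg_double_sums[OF _ _ outer]) auto
    then show ?thesis
      by (simp add: \<alpha>'_def \<mu>'_def case_prod_unfold mult.assoc)
  qed
  have "\<mu>' j \<in> \<M>" "\<alpha>' j \<ge> 0" for j
    using MU \<beta> AL by (auto simp: \<mu>'_def \<alpha>'_def case_prod_unfold)
  then show ?thesis
    unfolding convA_iff using \<alpha>'_sums val
    by (intro exI[of _ \<mu>'] exI[of _ \<alpha>']) (auto simp: sums_iff)
qed

lemma nvar_in_convA:
  assumes "\<mu> \<in> \<M>"
  shows "(\<lambda>A. if A \<in> M then nvar \<Omega> M \<mu> A else 0) \<in> convA \<Omega> M \<M>"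
proof -
  have delta_sums: "(\<lambda>n::nat. (if n = 0 then 1 else 0) * x) sums x" for x :: real
  proof -
    have "(\<lambda>n::nat. (if n = 0 then 1 else 0) * x) = (\<lambda>n. if n = 0 then x else 0)" by auto
    then show ?thesis using sums_single[of 0 "\<lambda>_. x"] by simp
  qed
  show ?thesis
    unfolding convA_iff using assms delta_sums[of 1] delta_sums[THEN sums_unique]
    by (intro exI[of _ "\<lambda>_. \<mu>"] exI[of _ "\<lambda>n. if n = 0 then 1 else 0"]) auto
qed

lemma midpoint_in_convA:
  assumes "m1 \<in> convA \<Omega> M \<M>" "m2 \<in> convA \<Omega> M \<M>"
  shows "(\<lambda>A. if A \<in> M then (m1 A + m2 A) / 2 else 0) \<in> convA \<Omega> M \<M>"
proof -
  define \<beta> where "\<beta> k = (if k < (2::nat) then 1/2 else (0::real))" for k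
  define mk where "mk k = (if k = (0::nat) then m1 else m2)" for k
  have "\<beta> sums (\<Sum>k\<in>{0,1}. \<beta> k)"
    by (rule sums_finite) (auto simp: \<beta>_def)
  moreover have "(\<lambda>k. \<beta> k * mk k A) sums (\<Sum>k\<in>{0,1}. \<beta> k * mk k A)" for A
    by (rule sums_finite) (auto simp: \<beta>_def)
  ultimately have \<beta>_sums: "\<beta> sums 1"
    and comb: "(\<Sum>k. \<beta> k * mk k A) = (m1 A + m2 A) / 2" for A
    by (auto simp: \<beta>_def mk_def sums_iff add_divide_distrib)
  have "(\<lambda>A. if A \<in> M then (\<Sum>k. \<beta> k * mk k A) else 0) \<in> convA \<Omega> M \<M>"
  proof (rule convA_convex)
    show "mk k \<in> convA \<Omega> M \<M>" for k using assms by (simp add: mk_def)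
    show "0 \<le> \<beta> k" for k by (simp add: \<beta>_def)
  qed (rule \<beta>_sums)
  then show ?thesis
    by (simp only: comb)
qed

end

end

definition control_bound :: "'a set set \<Rightarrow> ('a set \<Rightarrow> real) \<Rightarrow> ('a set \<Rightarrow> real) \<Rightarrow> real \<Rightarrow> bool" where
  "control_bound \<A> v m t \<longleftrightarrow> (\<exists>\<delta>>0. \<forall>A\<in>\<A>. m A < \<delta> \<longrightarrow> v A \<le> t)"

lemma control_bound_dominated:
  assumes t: "control_bound \<A> v m t" and c: "c > 0" and dom: "\<And>A. A \<in> \<A> \<Longrightarrow> c * m A \<le> m' A"
  shows "control_bound \<A> v m' t"
proof -
  obtain \<delta> where \<delta>: "\<delta> > 0" "\<forall>A\<in>\<A>. m A < \<delta> \<longrightarrow> v A \<le> t"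
    using t unfolding control_bound_def by blast
  have "v A \<le> t" if A: "A \<in> \<A>" "m' A < c * \<delta>" for A
  proof -
    have "c * m A < c * \<delta>" using dom[OF A(1)] A(2) by linarith
    then have "m A < \<delta>" using c by simp
    then show ?thesis using \<delta>(2) A(1) by blast
  qed
  then show ?thesis
    unfolding control_bound_def using \<delta>(1) c by (intro exI[of _ "c * \<delta>"]) auto
qed

context algebra
begin

text \<open>Suppose \<open>|\<mu>|\<close> is small on \<open>|\<lambda>|\<close>-small sets, but there
  are arbitrarily \<open>m\<close>-small sets \<open>B\<close> with \<open>|\<mu>|(B) \<ge> \<epsilon>\<close>.  Then adding \<open>|\<mu>|\<close> to \<open>m\<close> lowers every
  control bound of \<open>|\<lambda>|\<close> by a fixed \<open>\<gamma>\<close>: a set \<open>A\<close> small for the midpoint is disjoint from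
  the large part \<open>B - A\<close> of such a \<open>B\<close>, and \<open>|\<lambda>|(B - A) \<ge> \<gamma>\<close>.\<close>
lemma control_bound_midpoint:
  assumes lam: "lam \<in> ba \<Omega> M" and mu: "\<mu> \<in> ba \<Omega> M"
    and m: "m \<in> ba \<Omega> M" and m_nonneg: "\<And>A. 0 \<le> m A"
    and \<epsilon>: "\<epsilon> > 0" and \<gamma>: "\<And>A. A \<in> M \<Longrightarrow> tvar M lam A < \<gamma> \<Longrightarrow> tvar M \<mu> A < \<epsilon> / 2"
    and large: "\<And>\<delta>. \<delta> > 0 \<Longrightarrow> \<exists>B\<in>M. m B < \<delta> \<and> \<epsilon> \<le> tvar M \<mu> B"
    and t: "control_bound M (tvar M lam) m t"
  shows "control_bound M (tvar M lam) (\<lambda>A. if A \<in> M then (m A + nvar \<Omega> M \<mu> A) / 2 else 0) (t - \<gamma>)"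
proof -
  obtain \<delta>0 where \<delta>0: "\<delta>0 > 0" "\<And>A. A \<in> M \<Longrightarrow> m A < \<delta>0 \<Longrightarrow> tvar M lam A \<le> t"
    using t unfolding control_bound_def by blast
  obtain B where B: "B \<in> M" "m B < \<delta>0 / 2" "\<epsilon> \<le> tvar M \<mu> B"
    using large[of "\<delta>0 / 2"] \<delta>0(1) by auto
  define c where "c = max 1 (ba_norm \<Omega> M \<mu>)"
  define \<delta> where "\<delta> = min (\<delta>0 / 4) (\<epsilon> / (4 * c))"
  have c: "c \<ge> 1" by (simp add: c_def)
  have "tvar M lam A \<le> t - \<gamma>"
    if A: "A \<in> M" and small: "(m A + nvar \<Omega> M \<mu> A) / 2 < \<delta>" for A
  proof -
    have "m A < 2 * \<delta>" using small nvar_nonneg[OF mu, of A] by simp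
    moreover have "nvar \<Omega> M \<mu> A < 2 * \<delta>" using small m_nonneg[of A] by simp
    moreover have "2 * \<delta> \<le> \<delta>0 / 2" "2 * \<delta> \<le> \<epsilon> / (2 * c)"
      by (auto simp: \<delta>_def)
    ultimately have mA: "m A < \<delta>0 / 2" and nA: "nvar \<Omega> M \<mu> A < \<epsilon> / (2 * c)"
      by linarith+
    have "tvar M \<mu> A = c * nvar \<Omega> M \<mu> A"
      using c by (simp add: nvar_def c_def)
    then have muA: "tvar M \<mu> A < \<epsilon> / 2"
      using nA c by (simp add: field_simps)
    have BA: "B - A \<in> M" "B \<inter> A \<in> M" using A B(1) by auto
    have "(B - A) \<inter> (B \<inter> A) = {}" "(B - A) \<union> (B \<inter> A) = B" by auto
    then have "tvar M \<mu> B = tvar M \<mu> (B - A) + tvar M \<mu> (B \<inter> A)"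
      using tvar_additive[OF mu BA] by simp
    moreover have "tvar M \<mu> (B \<inter> A) \<le> tvar M \<mu> A"
      using tvar_mono[OF mu BA(2) A] by auto
    ultimately have "\<not> tvar M lam (B - A) < \<gamma>"
      using \<gamma>[OF BA(1)] B(3) muA by linarith
    moreover have "m (A \<union> B) < \<delta>0"
      using nonneg_subadditive[OF m m_nonneg A B(1)] mA B(2) by linarith
    then have "tvar M lam (A \<union> B) \<le> t"
      using \<delta>0(2) A B(1) by blast
    moreover have "tvar M lam (A \<union> B) = tvar M lam A + tvar M lam (B - A)"
      using tvar_additive[OF lam A BA(1)] by simp
    ultimately show ?thesis by linarith
  qed
  moreover have "\<delta> > 0" using \<delta>0(1) \<epsilon> c by (simp add: \<delta>_def)
  ultimately show ?thesis
    unfolding control_bound_def by (intro exI[of _ \<delta>]) auto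
qed

lemma control_bound_improve:
  assumes lam: "lam \<in> ba \<Omega> M" and mu: "\<mu> \<in> ba \<Omega> M" and mu_lam: "abs_cont M \<mu> lam"
    and m: "m \<in> ba \<Omega> M" and m_nonneg: "\<And>A. 0 \<le> m A" and not_mu_m: "\<not> abs_cont M \<mu> m"
  obtains \<gamma> where "\<gamma> > 0"
    "\<And>t. control_bound M (tvar M lam) m t \<Longrightarrow>
       control_bound M (tvar M lam) (\<lambda>A. if A \<in> M then (m A + nvar \<Omega> M \<mu> A) / 2 else 0) (t - \<gamma>)"
proof -
  obtain \<epsilon> where \<epsilon>: "\<epsilon> > 0"
    and large_tvar: "\<forall>\<delta>>0. \<exists>B\<in>M. tvar M m B < \<delta> \<and> \<not> tvar M \<mu> B < \<epsilon>"
    using not_mu_m unfolding abs_cont_def by blast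
  have large: "\<exists>B\<in>M. m B < \<delta> \<and> \<epsilon> \<le> tvar M \<mu> B" if "\<delta> > 0" for \<delta>
  proof -
    obtain B where B: "B \<in> M" "tvar M m B < \<delta>" "\<not> tvar M \<mu> B < \<epsilon>"
      using large_tvar \<open>\<delta> > 0\<close> by blast
    then show ?thesis
      using tvar_of_nonneg[OF m m_nonneg B(1)] by (intro bexI[of _ B]) auto
  qed
  have "\<epsilon> / 2 > 0" using \<epsilon> by simp
  then obtain \<gamma> where \<gamma>: "\<gamma> > 0" "\<And>A. A \<in> M \<Longrightarrow> tvar M lam A < \<gamma> \<Longrightarrow> tvar M \<mu> A < \<epsilon> / 2"
    using mu_lam unfolding abs_cont_def by blast
  show ?thesis
    by (rule that[OF \<gamma>(1)], rule control_bound_midpoint[OF lam mu m m_nonneg \<epsilon> \<gamma>(2) large])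
qed

lemma convA_glue_bounds:
  assumes \<M>_ba: "\<M> \<subseteq> ba \<Omega> M" and mk: "\<And>k::nat. mk k \<in> convA \<Omega> M \<M>"
    and tk: "\<And>k. control_bound M v (mk k) (tk k)"
  shows "\<exists>ms\<in>convA \<Omega> M \<M>. \<forall>k. control_bound M v ms (tk k)"
proof -
  define \<beta> where "\<beta> k = (1/2::real) ^ Suc k" for k
  have \<beta>: "\<And>k. \<beta> k > 0" "\<beta> sums 1"
    unfolding \<beta>_def by (simp, rule power_half_series)
  define ms where "ms = (\<lambda>A. if A \<in> M then (\<Sum>k. \<beta> k * mk k A) else 0)"
  have "ms \<in> convA \<Omega> M \<M>"
    unfolding ms_def using \<beta> mk by (intro convA_convex[OF \<M>_ba]) (auto simp: less_imp_le)
  moreover have "\<beta> k * mk k A \<le> ms A" if "A \<in> M" for k A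
    using sum_le_suminf[of "\<lambda>k. \<beta> k * mk k A" "{k}"] that \<beta> convA_bounds[OF \<M>_ba mk]
      summable_weighted_bounded[of \<beta> "\<lambda>k. mk k A"]
    by (auto simp: ms_def sums_iff less_imp_le)
  then have "control_bound M v ms (tk k)" for k
    using control_bound_dominated[OF tk \<beta>(1)] by blast
  ultimately show ?thesis by blast
qed

text \<open>Exhaustion: with \<open>\<eta>\<close> the infimum of all control bounds of \<open>|\<lambda>|\<close> with respect to elements
  of \<open>\<^bold>A(\<M>)\<close>, a convex combination of almost optimal elements attains every near-optimal bound,
  so by the improvement lemma no \<open>\<mu> \<in> \<M>\<close> can fail to be absolutely continuous
  with respect to it.\<close>
lemma convA_dominates:
  assumes lam: "lam \<in> ba \<Omega> M" and \<M>: "\<M> \<subseteq> ba_ac \<Omega> M lam" and ne: "\<M> \<noteq> {}"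
  shows "\<exists>m\<in>convA \<Omega> M \<M>. \<M> \<subseteq> ba_ac \<Omega> M m"
proof -
  have \<M>_ba: "\<M> \<subseteq> ba \<Omega> M" using \<M> by (auto simp: ba_ac_def)
  define v where "v = tvar M lam"
  define U where "U = {t. \<exists>m\<in>convA \<Omega> M \<M>. control_bound M v m t}"
  define \<eta> where "\<eta> = Inf U"
  obtain \<mu>0 where "\<mu>0 \<in> \<M>" using ne by blast
  then have "v \<Omega> \<in> U"
    using nvar_in_convA[OF \<M>_ba] tvar_mono[OF lam _ top] sets_into_space
    unfolding U_def control_bound_def v_def by (blast intro: zero_less_one)
  then have U_ne: "U \<noteq> {}" by blast
  have "0 \<le> t" if t: "t \<in> U" for t
  proof -
    obtain m \<delta> where m: "m \<in> convA \<Omega> M \<M>" and \<delta>: "\<delta> > 0" "\<forall>A\<in>M. m A < \<delta> \<longrightarrow> v A \<le> t"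
      using t unfolding U_def control_bound_def by blast
    have "m {} = 0" using ba_empty[OF convA_in_ba[OF \<M>_ba m]] .
    then have "v {} \<le> t" using \<delta> empty_sets by auto
    then show ?thesis using tvar_empty[OF lam] by (simp add: v_def)
  qed
  then have U_bdd: "bdd_below U" by (auto simp: bdd_below_def)
  have "\<exists>m t. m \<in> convA \<Omega> M \<M> \<and> control_bound M v m t \<and> t < \<eta> + 1 / (real k + 1)" for k :: nat
    using cInf_less_iff[OF U_ne U_bdd, of "\<eta> + 1 / (real k + 1)"] unfolding \<eta>_def U_def by auto
  then obtain mk tk where mk: "\<And>k. mk k \<in> convA \<Omega> M \<M>" "\<And>k. control_bound M v (mk k) (tk k)"
    and tk: "\<And>k. tk k < \<eta> + 1 / (real k + 1)"
    by metis
  obtain ms where ms: "ms \<in> convA \<Omega> M \<M>" and ms_bound: "\<And>k. control_bound M v ms (tk k)"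
    using convA_glue_bounds[where mk = mk and v = v and tk = tk, OF \<M>_ba mk(1) mk(2)] by blast
  have "abs_cont M \<mu> ms" if \<mu>: "\<mu> \<in> \<M>" for \<mu>
  proof (rule ccontr)
    assume "\<not> abs_cont M \<mu> ms"
    then obtain \<gamma> where \<gamma>: "\<gamma> > 0" and improve: "\<And>t. control_bound M v ms t \<Longrightarrow>
        control_bound M v (\<lambda>A. if A \<in> M then (ms A + nvar \<Omega> M \<mu> A) / 2 else 0) (t - \<gamma>)"
      using control_bound_improve[OF lam] \<mu> \<M> convA_in_ba[OF \<M>_ba ms] convA_bounds[OF \<M>_ba ms]
      unfolding v_def ba_ac_def by blast
    obtain k where k: "1 / (real k + 1) < \<gamma>"
      using reals_Archimedean[OF \<gamma>] by (auto simp: inverse_eq_divide add.commute)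
    have "tk k - \<gamma> \<in> U"
      unfolding U_def using improve[OF ms_bound]
        midpoint_in_convA[OF \<M>_ba ms nvar_in_convA[OF \<M>_ba \<mu>]]
      by (auto simp: if_distrib cong: if_cong)
    then have "\<eta> \<le> tk k - \<gamma>"
      unfolding \<eta>_def using U_bdd by (rule cInf_lower)
    then show False using tk[of k] k by linarith
  qed
  then have "\<M> \<subseteq> ba_ac \<Omega> M ms"
    using \<M>_ba unfolding ba_ac_def by blast
  with ms show ?thesis by blast
qed

end

theorem mainTheorem14:
  fixes \<Omega> :: "'a set" and \<A> :: "'a set set" and \<M> :: "('a set \<Rightarrow> real) set"
  assumes "algebra \<Omega> \<A>"
    and "\<M> \<subseteq> ba \<Omega> \<A>"
    and "\<M> \<noteq> {}"
  shows "(\<exists>lam\<in>ba \<Omega> \<A>. \<M> \<subseteq> ba_ac \<Omega> \<A> lam) \<longleftrightarrow> (\<exists>m\<in>convA \<Omega> \<A> \<M>. \<M> \<subseteq> ba_ac \<Omega> \<A> m)"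
proof
  assume "\<exists>lam\<in>ba \<Omega> \<A>. \<M> \<subseteq> ba_ac \<Omega> \<A> lam"
  then show "\<exists>m\<in>convA \<Omega> \<A> \<M>. \<M> \<subseteq> ba_ac \<Omega> \<A> m"
    using algebra.convA_dominates[OF assms(1)] assms(3) by blast
next
  assume "\<exists>m\<in>convA \<Omega> \<A> \<M>. \<M> \<subseteq> ba_ac \<Omega> \<A> m"
  then show "\<exists>lam\<in>ba \<Omega> \<A>. \<M> \<subseteq> ba_ac \<Omega> \<A> lam"
    using algebra.convA_in_ba[OF assms(1,2)] by blast
qed
end
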